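(* Fix a real number $c \ge 1$. For positive integers $n$ with $cn$ an integer, put $p=n$ and $q=cn$, and let $B_{p,q}$ be the random variable with $$\mathbb{P}(B_{p,q}=k) = \frac{\binom{q}{k}\binom{p+k}{k}}{\sum_{j=0}^{q}\binom{q}{j}\binom{p+j}{j}}, \qquad k=0,1,\dots,q.$$ Set $$m_{p,q} = \frac{q-p+\sqrt{p^2+6pq+q^2}}{4}, \qquad s_{p,q}^2 = \frac{q-p}{8}+\frac{(p+q)^2}{8\sqrt{p^2+6pq+q^2}}.$$ Then, as $n\to\infty$, $(B_{p,q}-m_{p,q})/s_{p,q}$ converges in distribution to a standard normal random variable. *)

theory Defs
  imports "HOL-Probability.Probability"
begin

definition B_weight :: "nat \<Rightarrow> nat \<Rightarrow> nat \<Rightarrow> real" where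
  "B_weight p q k = real (q choose k) * real ((p + k) choose k)"

definition B_pmf :: "nat \<Rightarrow> nat \<Rightarrow> nat pmf" where
  "B_pmf p q = embed_pmf (\<lambda>k. if k \<le> q then B_weight p q k / (\<Sum>j\<le>q. B_weight p q j) else 0)"

definition m_pq :: "real \<Rightarrow> real \<Rightarrow> real" where
  "m_pq p q = (q - p + sqrt (p^2 + 6*p*q + q^2)) / 4"

definition s2_pq :: "real \<Rightarrow> real \<Rightarrow> real" where
  "s2_pq p q = (q - p) / 8 + (p + q)^2 / (8 * sqrt (p^2 + 6*p*q + q^2))"

definition normalized_B :: "real \<Rightarrow> nat \<Rightarrow> real measure" where
  "normalized_B c n = (let p = n; q = nat \<lfloor>c * real n\<rfloor> in
     distr (measure_pmf (B_pmf p q)) borel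
       (\<lambda>k. (real k - m_pq (real p) (real q)) / sqrt (s2_pq (real p) (real q))))"

end

theory Submission
  imports Defs
begin

text \<open>
  The ratio of consecutive weights of \<open>B\<^sub>p\<^sub>,\<^sub>q\<close> is \<open>(q - k)(p + k + 1)/(k + 1)\<^sup>2\<close>, which decreases
  in \<open>k\<close>: the weights are log-concave. With \<open>p = n\<close>, \<open>q = cn\<close> and \<open>k = m + u\<close>, a second-order
  expansion of the logarithm of this ratio gives \<open>-(u + 1/2)/s\<^sup>2 + o(1/s)\<close> uniformly for
  \<open>|u| \<le> K s\<close>: \<open>m = m\<^sub>p\<^sub>,\<^sub>q\<close> is the root of \<open>(q - m)(p + m) = m\<^sup>2\<close>, which kills the leading
  term, and \<open>1/s\<^sup>2\<close> with \<open>s\<^sup>2 = s\<^sup>2\<^sub>p\<^sub>,\<^sub>q\<close> is the coefficient of \<open>-u\<close> in the first-order term.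
  These are the log-increments of the Gaussian profile \<open>exp (-(k - m)\<^sup>2/(2s\<^sup>2))\<close>, so summing
  them shows that on the window \<open>|k - m| \<le> K s\<close> the weights are a constant multiple of that
  profile up to a factor \<open>1 + o(1)\<close>, and Riemann sums turn their total into the normal mass
  of \<open>[-K, K]\<close>. Beyond the window log-concavity forces geometric decay at rate \<open>K/(2s)\<close>, so
  the tails carry relative mass \<open>O(1/K)\<close>. Letting \<open>K \<rightarrow> \<infinity>\<close> gives convergence of the
  distribution functions.
\<close>

section \<open>Riemann sums of the Gaussian\<close>

definition gauss :: "real \<Rightarrow> real" where
  "gauss t = exp (- (t^2) / 2)"

lemma continuous_on_gauss: "continuous_on S gauss"
  unfolding gauss_def by (auto intro!: continuous_intros)

lemma gauss_pos: "0 < gauss t"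
  unfolding gauss_def by simp

lemma gauss_le_1: "gauss t \<le> 1"
  unfolding gauss_def by simp

lemma gauss_lipschitz: "\<bar>gauss t - gauss u\<bar> \<le> \<bar>t - u\<bar>"
proof -
  have deriv: "DERIV gauss x :> - x * gauss x" for x
    unfolding gauss_def by (auto intro!: derivative_eq_intros simp: algebra_simps)
  have deriv_bound: "\<bar>- x * gauss x\<bar> \<le> 1" for x
  proof -
    have "\<bar>x\<bar> \<le> 1 + x^2/2"
      using zero_le_power2[of "\<bar>x\<bar> - 1"] by (simp add: power2_eq_square algebra_simps abs_mult_self_eq)
    also have "\<dots> \<le> exp (x^2/2)" by (rule exp_ge_add_one_self)
    finally have "\<bar>x\<bar> * exp (- (x^2)/2) \<le> exp (x^2/2) * exp (- (x^2)/2)"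
      by (intro mult_right_mono) auto
    also have "\<dots> = 1" by (simp add: exp_add[symmetric])
    finally show ?thesis by (simp add: gauss_def abs_mult)
  qed
  have "\<bar>gauss b - gauss a\<bar> \<le> b - a" if "a < b" for a b
  proof -
    have "\<exists>z>a. z < b \<and> gauss b - gauss a = (b - a) * (- z * gauss z)"
      by (rule MVT2[OF that, of gauss "\<lambda>x. - x * gauss x"]) (use deriv in auto)
    then obtain z where "a < z" "z < b" "gauss b - gauss a = (b - a) * (- z * gauss z)" by blast
    then have "\<bar>gauss b - gauss a\<bar> = (b - a) * \<bar>- z * gauss z\<bar>" using that by (simp add: abs_mult)
    also have "\<dots> \<le> b - a" using deriv_bound[of z] that by (simp add: mult_left_le)
    finally show ?thesis .
  qed
  from this[of t u] this[of u t] show ?thesis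
    by (cases t u rule: linorder_cases) auto
qed

lemma lattice_points_in_interval:
  fixes h a b c0 :: real
  assumes "0 < h" "a \<le> b" "0 \<le> a + c0"
  obtains k0 k1 :: nat
  where "{k::nat. a \<le> h * real k - c0 \<and> h * real k - c0 \<le> b} = {k0..k1}"
    and "a \<le> h * real k0 - c0" "h * real k0 - c0 < a + h"
    and "h * real k1 - c0 \<le> b" "b < h * real k1 - c0 + h"
proof
  define k0 where "k0 = nat \<lceil>(a + c0) / h\<rceil>"
  define k1 where "k1 = nat \<lfloor>(b + c0) / h\<rfloor>"
  have k0_real: "real k0 = real_of_int \<lceil>(a + c0) / h\<rceil>"
    unfolding k0_def using assms by simp
  have k1_real: "real k1 = real_of_int \<lfloor>(b + c0) / h\<rfloor>"
    unfolding k1_def using assms by simp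
  have "a \<le> h * real k - c0 \<longleftrightarrow> \<lceil>(a + c0) / h\<rceil> \<le> int k" for k
    using assms by (simp add: ceiling_le_iff field_simps)
  moreover have "h * real k - c0 \<le> b \<longleftrightarrow> int k \<le> \<lfloor>(b + c0) / h\<rfloor>" for k
    using assms by (simp add: le_floor_iff field_simps)
  ultimately show "{k::nat. a \<le> h * real k - c0 \<and> h * real k - c0 \<le> b} = {k0..k1}"
    using k0_real k1_real by (auto simp: k0_def k1_def) linarith+
  have "(a + c0) / h \<le> real k0" "real k0 < (a + c0) / h + 1" unfolding k0_real by linarith+
  then show "a \<le> h * real k0 - c0" "h * real k0 - c0 < a + h" using assms by (simp_all add: field_simps)
  have "real k1 \<le> (b + c0) / h" "(b + c0) / h < real k1 + 1" unfolding k1_real by linarith+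
  then show "h * real k1 - c0 \<le> b" "b < h * real k1 - c0 + h" using assms by (simp_all add: field_simps)
qed

context
  fixes f :: "real \<Rightarrow> real"
  assumes cont: "continuous_on UNIV f"
    and nonneg: "\<And>t. 0 \<le> f t" and le_1: "\<And>t. f t \<le> 1"
    and lipschitz: "\<And>t u. \<bar>f t - f u\<bar> \<le> \<bar>t - u\<bar>"
begin

private lemma integrable: "f integrable_on {a..b}"
  by (rule integrable_continuous_real) (rule continuous_on_subset[OF cont], simp)

private lemma integral_bounds:
  assumes "x \<le> y"
  shows "0 \<le> integral {x..y} f" "integral {x..y} f \<le> y - x"
proof -
  show "0 \<le> integral {x..y} f"
    by (rule integral_nonneg[OF integrable]) (simp add: nonneg)
  have "integral {x..y} f \<le> integral {x..y} (\<lambda>_. 1::real)"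
    by (rule integral_le[OF integrable]) (auto simp: le_1)
  then show "integral {x..y} f \<le> y - x" using assms by simp
qed

private lemma integral_split:
  assumes "a \<le> c" "c \<le> b"
  shows "integral {a..b} f = integral {a..c} f + integral {c..b} f"
  using Henstock_Kurzweil_Integration.integral_combine[OF assms integrable] by simp

private lemma cell_error:
  assumes "0 \<le> h"
  shows "\<bar>integral {u..u+h} f - h * f u\<bar> \<le> h^2"
proof -
  have "integral {u..u+h} f - h * f u = integral {u..u+h} (\<lambda>t. f t - f u)"
    using assms by (subst integral_diff) (auto simp: integrable)
  also have "norm \<dots> \<le> h * Henstock_Kurzweil_Integration.content (cbox u (u+h))"
  proof (rule has_integral_bound[of h "\<lambda>t. f t - f u"])
    show "((\<lambda>t. f t - f u) has_integral integral {u..u + h} (\<lambda>t. f t - f u)) (cbox u (u + h))"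
      unfolding cbox_interval by (intro integrable_integral integrable_diff integrable integrable_const_ivl)
    show "norm (f t - f u) \<le> h" if "t \<in> cbox u (u+h)" for t
      using lipschitz[of t u] that by (auto simp: cbox_interval)
  qed fact
  finally show ?thesis using assms by (simp add: power2_eq_square)
qed

private lemma cells_error:
  assumes "0 \<le> h"
  shows "\<bar>(\<Sum>i<N. h * f (u + real i * h)) - integral {u..u + real N * h} f\<bar> \<le> real N * h^2"
proof (induction N)
  case (Suc N)
  have "integral {u..u + real (Suc N) * h} f
      = integral {u..u + real N * h} f + integral {u + real N * h..u + real N * h + h} f"
    using assms by (subst integral_split[of _ "u + real N * h"]) (auto simp: algebra_simps)
  then show ?case
    using Suc.IH cell_error[OF assms, of "u + real N * h"] by (simp add: algebra_simps)
qed simp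

lemma riemann_sum_error:
  assumes h: "0 < h" "h \<le> 1" and "a \<le> b" and "0 \<le> a + c0"
  shows "\<bar>h * (\<Sum>k\<in>{k::nat. a \<le> h * real k - c0 \<and> h * real k - c0 \<le> b}. f (h * real k - c0))
           - integral {a..b} f\<bar> \<le> h * (b - a + 3)"
proof -
  obtain k0 k1 where lattice: "{k::nat. a \<le> h * real k - c0 \<and> h * real k - c0 \<le> b} = {k0..k1}"
    and first: "a \<le> h * real k0 - c0" "h * real k0 - c0 < a + h"
    and last: "h * real k1 - c0 \<le> b" "b < h * real k1 - c0 + h"
    using lattice_points_in_interval[OF h(1) assms(3,4)] by blast
  have integral_ab: "0 \<le> integral {a..b} f" "integral {a..b} f \<le> b - a"
    using integral_bounds[OF \<open>a \<le> b\<close>] by auto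
  show ?thesis
  proof (cases "k1 < k0")
    case True
    then have "h * (real k1 + 1) \<le> h * real k0" using h by simp
    then have "b - a < h" using first last by (simp add: algebra_simps)
    moreover have "h \<le> h * (b - a + 3)" using h \<open>a \<le> b\<close> by (simp add: mult_le_cancel_left1)
    moreover have "\<bar>h * (\<Sum>k\<in>{k0..k1}. f (h * real k - c0)) - integral {a..b} f\<bar> = integral {a..b} f"
      using True integral_ab by simp
    ultimately show ?thesis unfolding lattice using integral_ab by linarith
  next
    case False
    define N where "N = k1 - k0 + 1"
    define u where "u = h * real k0 - c0"
    have "(\<Sum>k\<in>{k0..k1}. f (h * real k - c0)) = (\<Sum>i<N. f (u + real i * h))"
      using False by (simp add: sum.atLeastAtMost_shift_0[of k0 k1] atLeast0AtMost lessThan_Suc_atMost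
          N_def u_def algebra_simps)
    then have sum_eq: "h * (\<Sum>k\<in>{k0..k1}. f (h * real k - c0)) = (\<Sum>i<N. h * f (u + real i * h))"
      by (simp add: sum_distrib_left)
    have end_N: "u + real N * h = h * real k1 - c0 + h"
      using False by (simp add: N_def u_def of_nat_diff algebra_simps)
    have "real N * h \<le> b - a + h" using end_N first last unfolding u_def by linarith
    then have N_h2: "real N * h^2 \<le> (b - a + h) * h"
      using mult_right_mono[of _ _ h] h by (simp add: power2_eq_square)
    have "u \<le> b" using False h last mult_left_mono[of "real k0" "real k1" h] unfolding u_def by linarith
    have "integral {a..b} f = integral {a..u} f + integral {u..b} f"
      by (rule integral_split) (use first \<open>u \<le> b\<close> u_def in auto)
    moreover have "integral {u..u + real N * h} f = integral {u..b} f + integral {b..u + real N * h} f"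
      by (rule integral_split) (use \<open>u \<le> b\<close> end_N last in auto)
    moreover have "0 \<le> integral {a..u} f" "integral {a..u} f \<le> h"
      using integral_bounds[of a u] first u_def by auto
    moreover have "0 \<le> integral {b..u + real N * h} f" "integral {b..u + real N * h} f \<le> h"
      using integral_bounds[of b "u + real N * h"] end_N last by auto
    ultimately have "\<bar>h * (\<Sum>k\<in>{k0..k1}. f (h * real k - c0)) - integral {a..b} f\<bar> \<le> (b - a + h) * h + h"
      using cells_error[of h u N] h N_h2 unfolding sum_eq by linarith
    also have "\<dots> \<le> h * (b - a + 3)" using h \<open>a \<le> b\<close> by (simp add: algebra_simps)
    finally show ?thesis unfolding lattice .
  qed
qed

end

lemmas riemann_sum_error_gauss =
  riemann_sum_error[OF continuous_on_gauss less_imp_le[OF gauss_pos] gauss_le_1 gauss_lipschitz]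

lemma prob_space_std_normal: "prob_space std_normal_distribution"
  using real_dist_normal_dist unfolding real_distribution_def by blast

lemma measure_std_normal_interval:
  assumes "a \<le> b"
  shows "measure std_normal_distribution {a..b} = integral {a..b} gauss / sqrt (2 * pi)"
proof -
  let ?f = "std_normal_density"
  have density_eq: "?f = (\<lambda>y. gauss y / sqrt (2 * pi))"
    by (rule ext) (simp add: std_normal_density_def gauss_def)
  have integrable: "?f integrable_on {a..b}"
    unfolding density_eq by (intro integrable_continuous_real continuous_intros continuous_on_gauss) simp
  have "((\<lambda>y. if y \<in> {a..b} then ?f y else 0) has_integral integral {a..b} ?f) UNIV"
    using has_integral_restrict_UNIV[of "{a..b}" ?f] integrable by (simp add: integrable_integral)
  moreover have "(\<lambda>y. if y \<in> {a..b} then ?f y else 0) = (\<lambda>y. ?f y * indicator {a..b} y)"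
    by (simp add: indicator_def fun_eq_iff)
  ultimately have "(\<integral>\<^sup>+ y. ennreal (?f y * indicator {a..b} y) \<partial>lborel) = ennreal (integral {a..b} ?f)"
    by (intro nn_integral_has_integral_lborel) (auto simp: indicator_def)
  moreover have "emeasure std_normal_distribution {a..b} = (\<integral>\<^sup>+ y. ennreal (?f y * indicator {a..b} y) \<partial>lborel)"
    by (subst emeasure_density) (auto intro!: nn_integral_cong simp: indicator_def)
  ultimately have "measure std_normal_distribution {a..b} = integral {a..b} ?f"
    unfolding measure_def using integral_nonneg[OF integrable] by (simp add: indicator_def)
  then show ?thesis unfolding density_eq by simp
qed

lemma std_normal_centered_intervals_tendsto_1:
  "(\<lambda>n. measure std_normal_distribution {- real n..real n}) \<longlonglongrightarrow> 1"
proof -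
  interpret prob_space std_normal_distribution by (rule prob_space_std_normal)
  have "(\<Union>n. {- real n..real n}) = UNIV"
  proof -
    have "x \<in> {- real (nat \<lceil>\<bar>x\<bar>\<rceil>)..real (nat \<lceil>\<bar>x\<bar>\<rceil>)}" for x :: real by auto linarith+
    then show ?thesis by blast
  qed
  moreover have "(\<lambda>n. measure std_normal_distribution {- real n..real n})
      \<longlonglongrightarrow> measure std_normal_distribution (\<Union>n. {- real n..real n})"
    by (rule finite_Lim_measure_incseq) (auto simp: incseq_def)
  ultimately show ?thesis using prob_space by simp
qed

lemma sqrt_2pi_bounds: "2 \<le> sqrt (2 * pi)" "sqrt (2 * pi) \<le> 3"
proof -
  have "sqrt 4 \<le> sqrt (2 * pi)" using pi_gt3 by (intro real_sqrt_le_mono) auto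
  then show "2 \<le> sqrt (2 * pi)" by simp
  have "sqrt (2 * pi) \<le> sqrt 9" using pi_less_4 by (intro real_sqrt_le_mono) auto
  then show "sqrt (2 * pi) \<le> 3" by simp
qed

lemma quotient_approx:
  fixes L P num den Gx GK e :: real
  assumes L: "2 \<le> L" "L \<le> 3" and P: "0 \<le> P" "P \<le> 1" and e: "0 < e" "e \<le> 1/10"
    and num: "\<bar>num - Gx\<bar> \<le> 3 * e" and den: "\<bar>den - GK\<bar> \<le> 4 * e"
    and Gx: "L * (P - e) \<le> Gx" "Gx \<le> L * P" and GK: "L * (1 - e) \<le> GK" "GK \<le> L"
  shows "\<bar>num / den - P\<bar> \<le> 10 * e"
proof -
  have "L * e \<le> 3 * e" "2 * (1 - e) \<le> L * (1 - e)" using L e by (intro mult_right_mono; simp)+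
  then have "2 - 2 * e \<le> GK" using GK by simp
  then have den_ge: "7/5 \<le> den" using GK den e by linarith
  have "\<bar>P * (L - GK)\<bar> \<le> \<bar>L - GK\<bar>" "\<bar>P * (GK - den)\<bar> \<le> \<bar>GK - den\<bar>"
    using P by (simp_all add: abs_mult mult_left_le_one_le)
  moreover have "\<bar>L - GK\<bar> \<le> L * e" "\<bar>Gx - L * P\<bar> \<le> L * e" "\<bar>GK - den\<bar> \<le> 4 * e"
    using GK Gx den by (simp_all add: algebra_simps abs_minus_commute)
  moreover have "num - P * den = (num - Gx) + (Gx - L * P) + P * (L - GK) + P * (GK - den)"
    by (simp add: algebra_simps)
  ultimately have "\<bar>num - P * den\<bar> \<le> 13 * e" using num \<open>L * e \<le> 3 * e\<close> by linarith
  have "\<bar>num / den - P\<bar> = \<bar>num - P * den\<bar> / den" using den_ge by (simp add: field_simps)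
  also have "\<dots> \<le> (13 * e) / (7/5)" using \<open>\<bar>num - P * den\<bar> \<le> 13 * e\<close> den_ge by (intro frac_le) auto
  also have "\<dots> \<le> 10 * e" using e by simp
  finally show ?thesis .
qed

section \<open>Geometric tails of log-concave sequences\<close>

lemma abs_exp_minus_1_le:
  fixes x :: real
  assumes "\<bar>x\<bar> \<le> 1/2"
  shows "\<bar>exp x - 1\<bar> \<le> 2 * \<bar>x\<bar>"
proof -
  have "exp x \<le> 1 + 2 * \<bar>x\<bar>" using exp_bound_lemma[of x] assms by simp
  with exp_ge_add_one_self[of x] show ?thesis by linarith
qed

lemma inverse_one_minus_exp_le:
  fixes d :: real
  assumes "0 < d"
  shows "1 / (1 - exp (- d)) \<le> 1 + 1 / d"
proof -
  have "exp (- d) \<le> 1 / (1 + d)"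
    using exp_ge_add_one_self[of d] assms by (simp add: exp_minus field_simps)
  then have "d / (1 + d) \<le> 1 - exp (- d)" using assms by (simp add: field_simps)
  then have "1 / (1 - exp (- d)) \<le> 1 / (d / (1 + d))"
    using assms by (intro divide_left_mono) auto
  also have "\<dots> = 1 + 1 / d" using assms by (simp add: field_simps)
  finally show ?thesis .
qed

lemma sum_power_le_geometric:
  fixes r :: real
  assumes "0 \<le> r" "r < 1"
  shows "(\<Sum>i\<le>n. r^i) \<le> 1 / (1 - r)"
proof -
  have "(\<Sum>i\<le>n. r^i) = (1 - r^Suc n) / (1 - r)" using sum_gp0[of r n] assms by simp
  also have "\<dots> \<le> 1 / (1 - r)" using assms by (intro divide_right_mono) auto
  finally show ?thesis .
qed

definition log_concave_upto :: "nat \<Rightarrow> (nat \<Rightarrow> real) \<Rightarrow> bool" where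
  "log_concave_upto q w \<longleftrightarrow>
     (\<forall>i j. i \<le> j \<longrightarrow> j < q \<longrightarrow> ln (w (Suc j)) - ln (w j) \<le> ln (w (Suc i)) - ln (w i))"

lemma steps_le_imp_le:
  fixes F :: "nat \<Rightarrow> real"
  assumes "a \<le> b" "\<And>j. a \<le> j \<Longrightarrow> j < b \<Longrightarrow> F (Suc j) - F j \<le> - d"
  shows "F b \<le> F a - real (b - a) * d"
proof -
  have "F b - F a = (\<Sum>j = a..<b. F (Suc j) - F j)" by (rule sum_Suc_diff'[OF assms(1), symmetric])
  also have "\<dots> \<le> (\<Sum>j = a..<b. - d)" using assms(2) by (intro sum_mono) auto
  finally show ?thesis by simp
qed

lemma steps_abs_le_imp_abs_le:
  fixes F :: "nat \<Rightarrow> real"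
  assumes "a \<le> b" "\<And>j. a \<le> j \<Longrightarrow> j < b \<Longrightarrow> \<bar>F (Suc j) - F j\<bar> \<le> d"
  shows "\<bar>F b - F a\<bar> \<le> real (b - a) * d"
proof -
  have "\<bar>F b - F a\<bar> = \<bar>\<Sum>j = a..<b. F (Suc j) - F j\<bar>" by (simp only: sum_Suc_diff'[OF assms(1)])
  also have "\<dots> \<le> (\<Sum>j = a..<b. d)" using assms(2) by (intro sum_abs[THEN order_trans] sum_mono) auto
  finally show ?thesis by simp
qed

lemma geometric_decay_of_log_steps:
  fixes w :: "nat \<Rightarrow> real"
  assumes pos: "\<And>k. k \<le> q \<Longrightarrow> 0 < w k"
    and "a \<le> b" "b \<le> q" "\<And>j. a \<le> j \<Longrightarrow> j < b \<Longrightarrow> ln (w (Suc j)) - ln (w j) \<le> - d"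
  shows "w b \<le> w a * exp (- d) ^ (b - a)"
proof -
  have "ln (w b) \<le> ln (w a) - real (b - a) * d"
    by (rule steps_le_imp_le[of a b "\<lambda>k. ln (w k)"]) (use assms in auto)
  then have "w b \<le> exp (ln (w a) - real (b - a) * d)"
    using pos[OF \<open>b \<le> q\<close>] by (metis exp_le_cancel_iff exp_ln)
  also have "\<dots> = w a * exp (- d) ^ (b - a)"
    using pos[of a] assms(2,3) by (simp add: exp_diff exp_add exp_of_nat_mult[symmetric] exp_minus field_simps)
  finally show ?thesis .
qed

lemma log_concave_upper_tail:
  assumes pos: "\<And>k. k \<le> q \<Longrightarrow> 0 < w k" and lc: "log_concave_upto q w"
    and "k1 < q" "0 < d" and decrease: "ln (w (Suc k1)) - ln (w k1) \<le> - d"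
  shows "(\<Sum>k = k1..q. w k) \<le> w k1 / (1 - exp (- d))"
proof -
  have "w k \<le> w k1 * exp (- d) ^ (k - k1)" if "k \<in> {k1..q}" for k
  proof (rule geometric_decay_of_log_steps[OF pos])
    fix j assume "k1 \<le> j" "j < k"
    with lc that decrease show "ln (w (Suc j)) - ln (w j) \<le> - d"
      unfolding log_concave_upto_def by (meson atLeastAtMost_iff order.trans order_less_le_trans)
  qed (use that in auto)
  then have "(\<Sum>k = k1..q. w k) \<le> (\<Sum>k = k1..q. w k1 * exp (- d) ^ (k - k1))"
    by (rule sum_mono)
  also have "\<dots> = w k1 * (\<Sum>i\<le>q - k1. exp (- d) ^ i)"
    using \<open>k1 < q\<close> by (simp add: sum.atLeastAtMost_shift_0[of k1 q] atLeast0AtMost sum_distrib_left)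
  also have "\<dots> \<le> w k1 * (1 / (1 - exp (- d)))"
    using pos[of k1] \<open>k1 < q\<close> \<open>0 < d\<close> by (intro mult_left_mono sum_power_le_geometric) auto
  finally show ?thesis by simp
qed

lemma log_concave_lower_tail:
  assumes pos: "\<And>k. k \<le> q \<Longrightarrow> 0 < w k" and lc: "log_concave_upto q w"
    and "k2 < q" "0 < d" and increase: "d \<le> ln (w (Suc k2)) - ln (w k2)"
  shows "(\<Sum>k\<le>k2. w k) \<le> w k2 / (1 - exp (- d))"
proof -
  let ?v = "\<lambda>k. w (k2 - k)"
  have "?v k \<le> ?v 0 * exp (- d) ^ (k - 0)" if "k \<le> k2" for k
  proof (rule geometric_decay_of_log_steps[where q=k2])
    fix j assume "0 \<le> j" "j < k"
    with lc that \<open>k2 < q\<close>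
    have "ln (w (Suc k2)) - ln (w k2) \<le> ln (w (Suc (k2 - Suc j))) - ln (w (k2 - Suc j))"
      unfolding log_concave_upto_def by auto
    moreover have "Suc (k2 - Suc j) = k2 - j" using \<open>j < k\<close> that by simp
    ultimately show "ln (?v (Suc j)) - ln (?v j) \<le> - d" using increase by simp
  qed (use pos \<open>k2 < q\<close> that in auto)
  then have "(\<Sum>k\<le>k2. ?v k) \<le> (\<Sum>k\<le>k2. w k2 * exp (- d) ^ k)"
    by (intro sum_mono) simp
  also have "\<dots> = w k2 * (\<Sum>k\<le>k2. exp (- d) ^ k)" by (simp add: sum_distrib_left)
  also have "\<dots> \<le> w k2 * (1 / (1 - exp (- d)))"
    using pos[of k2] \<open>k2 < q\<close> \<open>0 < d\<close> by (intro mult_left_mono sum_power_le_geometric) auto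
  also have "(\<Sum>k\<le>k2. ?v k) = (\<Sum>k\<le>k2. w k)"
    using sum.atLeastAtMost_rev[of w 0 k2] by (simp add: atLeast0AtMost)
  finally show ?thesis by simp
qed

section \<open>Log-concave weights with Gaussian log-increments\<close>

text \<open>\<open>-(j + 1/2 - m)/\<sigma>\<^sup>2\<close> is the increment of \<open>-(x - m)\<^sup>2/(2\<sigma>\<^sup>2)\<close> from \<open>x = j\<close> to \<open>x = j + 1\<close>.\<close>

definition gaussian_log_steps :: "real \<Rightarrow> real \<Rightarrow> nat \<Rightarrow> (nat \<Rightarrow> real) \<Rightarrow> real \<Rightarrow> real \<Rightarrow> bool" where
  "gaussian_log_steps K e q w m \<sigma> \<longleftrightarrow>
     1 \<le> m - K * \<sigma> \<and> m + K * \<sigma> + 1 \<le> real q \<and>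
     (\<forall>j::nat. \<bar>real j - m\<bar> \<le> K * \<sigma> \<longrightarrow>
        \<bar>ln (w (Suc j)) - ln (w j) + (real j + 1/2 - m) / \<sigma>^2\<bar> \<le> e / \<sigma>)"

locale gaussian_window =
  fixes q :: nat and w :: "nat \<Rightarrow> real" and m \<sigma> K e :: real
  assumes pos: "\<And>k. k \<le> q \<Longrightarrow> 0 < w k"
    and log_concave: "log_concave_upto q w"
    and sigma_ge_1: "1 \<le> \<sigma>" and K_le_sigma: "K \<le> \<sigma>" and K_ge_2: "2 \<le> K"
    and gaussian_steps: "gaussian_log_steps (K + 2) e q w m \<sigma>"
    and e_nonneg: "0 \<le> e" and e_small: "(K + 3) * e \<le> 1/2"
begin

definition zscore :: "nat \<Rightarrow> real" where
  "zscore k = (real k - m) / \<sigma>"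

definition defect :: "nat \<Rightarrow> real" where
  "defect k = ln (w k) + (real k - m)^2 / (2 * \<sigma>^2)"

definition center :: nat where
  "center = nat \<lfloor>m\<rfloor>"

definition amplitude :: real where
  "amplitude = exp (defect center)"

lemma window_left: "1 \<le> m - (K + 2) * \<sigma>"
  and window_right: "m + (K + 2) * \<sigma> + 1 \<le> real q"
  and log_step: "\<bar>real j - m\<bar> \<le> (K + 2) * \<sigma> \<Longrightarrow>
       \<bar>ln (w (Suc j)) - ln (w j) + (real j + 1/2 - m) / \<sigma>^2\<bar> \<le> e / \<sigma>"
  using gaussian_steps unfolding gaussian_log_steps_def by auto

lemma sigma_pos: "0 < \<sigma>"
  using sigma_ge_1 by simp

lemma amplitude_pos: "0 < amplitude"
  unfolding amplitude_def by simp

lemma e_le_tenth: "e \<le> 1/10"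
  using e_small K_ge_2 e_nonneg mult_right_mono[of 5 "K + 3" e] by simp

lemma center_close: "\<bar>real center - m\<bar> \<le> 1"
proof -
  have "0 \<le> m" using window_left sigma_ge_1 K_ge_2 by (smt (verit) mult_nonneg_nonneg)
  then show ?thesis unfolding center_def by linarith
qed

lemma zscore_le_iff: "zscore k \<le> x \<longleftrightarrow> real k - m \<le> x * \<sigma>"
  and le_zscore_iff: "x \<le> zscore k \<longleftrightarrow> x * \<sigma> \<le> real k - m"
  and zscore_less_iff: "zscore k < x \<longleftrightarrow> real k - m < x * \<sigma>"
  and less_zscore_iff: "x < zscore k \<longleftrightarrow> x * \<sigma> < real k - m"
  unfolding zscore_def using sigma_pos
  by (simp_all add: pos_divide_le_eq pos_le_divide_eq pos_divide_less_eq pos_less_divide_eq)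

lemma defect_step:
  assumes "\<bar>real j - m\<bar> \<le> (K + 2) * \<sigma>"
  shows "\<bar>defect (Suc j) - defect j\<bar> \<le> e / \<sigma>"
proof -
  have "((real j + 1 - m)^2 - (real j - m)^2) / (2 * \<sigma>^2) = (real j + 1/2 - m) / \<sigma>^2"
    using sigma_pos by (simp add: power2_eq_square field_simps)
  then have "defect (Suc j) - defect j = ln (w (Suc j)) - ln (w j) + (real j + 1/2 - m) / \<sigma>^2"
    unfolding defect_def by (simp add: diff_divide_distrib[symmetric] add_ac)
  then show ?thesis using log_step[OF assms] by simp
qed

lemma defect_close:
  assumes "\<bar>real k - m\<bar> \<le> (K + 1) * \<sigma>"
  shows "\<bar>defect k - defect center\<bar> \<le> (K + 2) * e"
proof -
  let ?a = "min k center" and ?b = "max k center"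
  have "\<bar>defect ?b - defect ?a\<bar> \<le> real (?b - ?a) * (e / \<sigma>)"
  proof (rule steps_abs_le_imp_abs_le)
    fix j assume "?a \<le> j" "j < ?b"
    then have "real ?a \<le> real j" "real j \<le> real ?b" by auto
    then have "\<bar>real j - m\<bar> \<le> (K + 2) * \<sigma>"
      using assms center_close sigma_ge_1 by (auto simp: algebra_simps split: if_splits)
    then show "\<bar>defect (Suc j) - defect j\<bar> \<le> e / \<sigma>" by (rule defect_step)
  qed simp
  also have "\<dots> \<le> ((K + 2) * \<sigma>) * (e / \<sigma>)"
    using assms center_close sigma_ge_1 e_nonneg
    by (intro mult_right_mono) (auto simp: algebra_simps of_nat_diff)
  also have "\<dots> = (K + 2) * e" using sigma_pos by simp
  finally show ?thesis by (cases "k \<le> center") (auto simp: max_def min_def abs_minus_commute)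
qed

lemma exp_defect_close:
  assumes "\<bar>real k - m\<bar> \<le> (K + 1) * \<sigma>"
  shows "\<bar>exp (defect k - defect center) - 1\<bar> \<le> 2 * (K + 2) * e"
proof -
  have close: "\<bar>defect k - defect center\<bar> \<le> (K + 2) * e" by (rule defect_close[OF assms])
  moreover have "(K + 2) * e \<le> (K + 3) * e" using e_nonneg by (intro mult_right_mono) auto
  ultimately have "\<bar>defect k - defect center\<bar> \<le> 1/2" using e_small by linarith
  then have "\<bar>exp (defect k - defect center) - 1\<bar> \<le> 2 * \<bar>defect k - defect center\<bar>"
    by (rule abs_exp_minus_1_le)
  also have "\<dots> \<le> 2 * (K + 2) * e" using close by (simp add: algebra_simps)
  finally show ?thesis .
qed

lemma weight_eq_gauss:
  assumes "k \<le> q"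
  shows "w k = amplitude * gauss (zscore k) * exp (defect k - defect center)"
proof -
  have "ln (w k) = defect center + (- ((zscore k)^2) / 2) + (defect k - defect center)"
    unfolding defect_def zscore_def using sigma_pos by (simp add: power_divide field_simps)
  then have "w k = exp (defect center + (- ((zscore k)^2) / 2) + (defect k - defect center))"
    using pos[OF assms] by (metis exp_ln)
  then show ?thesis unfolding amplitude_def gauss_def by (simp only: mult_exp_exp)
qed

lemma weight_le_amplitude:
  assumes "k \<le> q" "\<bar>real k - m\<bar> \<le> (K + 1) * \<sigma>"
  shows "w k \<le> 2 * amplitude"
proof -
  have "exp (defect k - defect center) \<le> 2"
    using exp_defect_close[OF assms(2)] e_small e_nonneg mult_right_mono[of "K + 2" "K + 3" e] by linarith
  then have "amplitude * gauss (zscore k) * exp (defect k - defect center) \<le> amplitude * 1 * 2"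
    using amplitude_pos gauss_le_1 gauss_pos by (intro mult_mono) (auto simp: less_imp_le)
  then show ?thesis using weight_eq_gauss[OF assms(1)] by simp
qed

end

context gaussian_window
begin

lemma gauss_sum_approx:
  assumes "-K \<le> x" "x \<le> K"
  shows "\<bar>(1/\<sigma>) * (\<Sum>k\<in>{k. k \<le> q \<and> -K \<le> zscore k \<and> zscore k \<le> x}. gauss (zscore k))
          - integral {-K..x} gauss\<bar> \<le> (2*K + 3) / \<sigma>"
proof -
  have zscore_eq: "zscore k = (1/\<sigma>) * real k - m/\<sigma>" for k
    unfolding zscore_def by (simp add: diff_divide_distrib)
  have "k \<le> q" if "zscore k \<le> x" for k
  proof -
    have "x * \<sigma> \<le> K * \<sigma>" using assms sigma_pos by (intro mult_right_mono) auto
    then have "real k \<le> m + K * \<sigma>" using that by (simp add: zscore_le_iff)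
    also have "\<dots> \<le> real q" using window_right sigma_ge_1 K_ge_2 by (smt (verit) mult_right_mono)
    finally show ?thesis by simp
  qed
  then have lattice: "{k. k \<le> q \<and> -K \<le> zscore k \<and> zscore k \<le> x}
      = {k::nat. -K \<le> (1/\<sigma>) * real k - m/\<sigma> \<and> (1/\<sigma>) * real k - m/\<sigma> \<le> x}"
    unfolding zscore_eq by auto
  have "K * \<sigma> \<le> m" using window_left sigma_ge_1 by (simp add: algebra_simps)
  then have "0 \<le> -K + m/\<sigma>" using sigma_pos by (simp add: pos_le_divide_eq)
  then have "\<bar>(1/\<sigma>) * (\<Sum>k\<in>{k. k \<le> q \<and> -K \<le> zscore k \<and> zscore k \<le> x}. gauss (zscore k))
          - integral {-K..x} gauss\<bar> \<le> (1/\<sigma>) * (x - (-K) + 3)"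
    unfolding lattice unfolding zscore_eq using sigma_ge_1 assms by (intro riemann_sum_error_gauss) auto
  also have "\<dots> \<le> (2*K + 3) / \<sigma>" using assms sigma_pos by (simp add: divide_right_mono)
  finally show ?thesis .
qed

lemma weight_sum_approx:
  assumes in_range: "\<And>k. k \<in> S \<Longrightarrow> k \<le> q"
    and in_window: "\<And>k. k \<in> S \<Longrightarrow> \<bar>real k - m\<bar> \<le> (K + 1) * \<sigma>"
  shows "\<bar>(\<Sum>k\<in>S. w k) / (amplitude * \<sigma>) - (1/\<sigma>) * (\<Sum>k\<in>S. gauss (zscore k))\<bar>
    \<le> 2 * (K + 2) * e * ((1/\<sigma>) * (\<Sum>k\<in>S. gauss (zscore k)))"
proof -
  have "(\<Sum>k\<in>S. w k) / (amplitude * \<sigma>) - (1/\<sigma>) * (\<Sum>k\<in>S. gauss (zscore k))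
      = (1/\<sigma>) * (\<Sum>k\<in>S. gauss (zscore k) * (exp (defect k - defect center) - 1))"
    using amplitude_pos sigma_pos weight_eq_gauss in_range
    by (simp add: sum_subtractf sum_divide_distrib algebra_simps)
  also have "\<bar>\<dots>\<bar> \<le> (1/\<sigma>) * (\<Sum>k\<in>S. gauss (zscore k) * (2 * (K + 2) * e))"
  proof -
    have "\<bar>gauss (zscore k) * (exp (defect k - defect center) - 1)\<bar> \<le> gauss (zscore k) * (2 * (K + 2) * e)"
      if "k \<in> S" for k
      using exp_defect_close[OF in_window[OF that]] gauss_pos[of "zscore k"]
      by (simp add: abs_mult mult_left_mono)
    then have "\<bar>\<Sum>k\<in>S. gauss (zscore k) * (exp (defect k - defect center) - 1)\<bar>
        \<le> (\<Sum>k\<in>S. gauss (zscore k) * (2 * (K + 2) * e))"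
      by (intro order_trans[OF sum_abs] sum_mono)
    then show ?thesis using sigma_pos by (simp add: abs_mult divide_right_mono)
  qed
  also have "\<dots> = 2 * (K + 2) * e * ((1/\<sigma>) * (\<Sum>k\<in>S. gauss (zscore k)))"
    unfolding sum_distrib_right[symmetric] by (simp only: ac_simps)
  finally show ?thesis .
qed

lemma central_sum_approx:
  assumes "-K \<le> x" "x \<le> K"
  shows "\<bar>(\<Sum>k\<in>{k. k \<le> q \<and> -K \<le> zscore k \<and> zscore k \<le> x}. w k) / (amplitude * \<sigma>)
          - integral {-K..x} gauss\<bar> \<le> 2 * (K + 2) * e * (4*K + 3) + (2*K + 3) / \<sigma>"
proof -
  define S where "S = {k. k \<le> q \<and> -K \<le> zscore k \<and> zscore k \<le> x}"
  define R where "R = (1/\<sigma>) * (\<Sum>k\<in>S. gauss (zscore k))"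
  have x_sigma: "x * \<sigma> \<le> K * \<sigma>" using assms sigma_pos by (intro mult_right_mono) auto
  have window: "\<bar>real k - m\<bar> \<le> (K + 1) * \<sigma>" if "k \<in> S" for k
  proof -
    from that have "- K * \<sigma> \<le> real k - m" "real k - m \<le> x * \<sigma>"
      by (simp_all add: S_def zscore_le_iff le_zscore_iff)
    with x_sigma sigma_ge_1 show ?thesis unfolding abs_le_iff distrib_right by linarith
  qed
  have riemann: "\<bar>R - integral {-K..x} gauss\<bar> \<le> (2*K + 3) / \<sigma>"
    unfolding R_def S_def by (rule gauss_sum_approx[OF assms])
  have "integral {-K..x} gauss \<le> integral {-K..x} (\<lambda>_. 1::real)"
    by (intro integral_le integrable_continuous_real continuous_on_gauss) (auto simp: gauss_le_1)
  then have "integral {-K..x} gauss \<le> x + K" using assms by simp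
  moreover have "(2*K + 3) / \<sigma> \<le> 2*K + 3" using sigma_ge_1 K_ge_2 by (simp add: divide_le_eq)
  ultimately have "R \<le> 4*K + 3" using riemann assms by linarith
  moreover have "0 \<le> R"
    unfolding R_def using sigma_pos by (intro mult_nonneg_nonneg sum_nonneg) (auto simp: less_imp_le gauss_pos)
  ultimately have "2 * (K + 2) * e * R \<le> 2 * (K + 2) * e * (4*K + 3)"
    using e_nonneg K_ge_2 by (intro mult_left_mono) auto
  moreover have "\<bar>(\<Sum>k\<in>S. w k) / (amplitude * \<sigma>) - R\<bar> \<le> 2 * (K + 2) * e * R"
    unfolding R_def by (rule weight_sum_approx) (auto simp: S_def intro: window)
  ultimately show ?thesis using riemann unfolding S_def by linarith
qed

end

context gaussian_window
begin

lemma K_sigma_nonneg: "0 \<le> K * \<sigma>"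
  using K_ge_2 sigma_pos by simp

lemma tail_from_boundary:
  assumes "0 \<le> W" "W \<le> 2 * amplitude" "T \<le> W / (1 - exp (- (K / (2*\<sigma>))))"
  shows "T \<le> 6 * amplitude * \<sigma> / K"
proof -
  have "0 < K / (2*\<sigma>)" using K_ge_2 sigma_pos by simp
  then have "1 / (1 - exp (- (K / (2*\<sigma>)))) \<le> 1 + 2*\<sigma>/K"
    using inverse_one_minus_exp_le by (metis divide_divide_eq_right divide_self_if mult_1)
  have "T \<le> W * (1 / (1 - exp (- (K / (2*\<sigma>)))))" using assms(3) by simp
  also have "\<dots> \<le> W * (1 + 2*\<sigma>/K)" by (rule mult_left_mono) fact+
  also have "\<dots> \<le> 2 * amplitude * (3*\<sigma>/K)"
    using assms(1,2) K_le_sigma K_ge_2 sigma_pos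
    by (intro mult_mono) (auto simp: field_simps)
  finally show ?thesis by simp
qed

lemma upper_tail_bound: "(\<Sum>k\<in>{k. k \<le> q \<and> K < zscore k}. w k) \<le> 6 * amplitude * \<sigma> / K"
proof -
  define k1 where "k1 = nat (\<lfloor>m + K * \<sigma>\<rfloor> + 1)"
  have "0 \<le> m + K * \<sigma>" using window_left sigma_ge_1 K_ge_2 by (smt (verit) mult_nonneg_nonneg)
  then have k1: "m + K * \<sigma> < real k1" "real k1 \<le> m + K * \<sigma> + 1"
    unfolding k1_def by linarith+
  have "real k1 < m + (K + 2) * \<sigma> + 1" using k1 sigma_pos by (simp add: algebra_simps)
  then have "k1 < q" using window_right by simp
  have k1_window: "\<bar>real k1 - m\<bar> \<le> (K + 1) * \<sigma>"
    unfolding abs_le_iff distrib_right using k1 sigma_ge_1 K_sigma_nonneg by simp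
  have "ln (w (Suc k1)) - ln (w k1) \<le> - ((real k1 + 1/2 - m) / \<sigma>^2) + e / \<sigma>"
    using log_step[of k1] k1_window sigma_pos by (simp add: algebra_simps)
  also have "\<dots> \<le> - (K / \<sigma>) + e / \<sigma>"
  proof -
    have "(K * \<sigma>) / \<sigma>^2 \<le> (real k1 + 1/2 - m) / \<sigma>^2" using k1 by (simp add: divide_right_mono)
    then show ?thesis using sigma_pos by (simp add: power2_eq_square)
  qed
  also have "\<dots> \<le> - (K / (2*\<sigma>))" using e_le_tenth K_ge_2 sigma_pos by (simp add: field_simps)
  finally have "(\<Sum>k = k1..q. w k) \<le> w k1 / (1 - exp (- (K / (2*\<sigma>))))"
    using K_ge_2 sigma_pos \<open>k1 < q\<close>
    by (intro log_concave_upper_tail[OF pos log_concave]) auto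
  moreover have "(\<Sum>k\<in>{k. k \<le> q \<and> K < zscore k}. w k) \<le> (\<Sum>k = k1..q. w k)"
  proof (rule sum_mono2)
    show "{k. k \<le> q \<and> K < zscore k} \<subseteq> {k1..q}"
      using k1 by (auto simp: less_zscore_iff)
  qed (use pos in \<open>auto intro: less_imp_le\<close>)
  ultimately have "(\<Sum>k\<in>{k. k \<le> q \<and> K < zscore k}. w k) \<le> w k1 / (1 - exp (- (K / (2*\<sigma>))))"
    by linarith
  then show ?thesis
    using pos[of k1] weight_le_amplitude[of k1] \<open>k1 < q\<close> k1_window
    by (intro tail_from_boundary[of "w k1"]) auto
qed

lemma lower_tail_bound: "(\<Sum>k\<in>{k. k \<le> q \<and> zscore k < -K}. w k) \<le> 6 * amplitude * \<sigma> / K"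
proof -
  define k2 where "k2 = nat (\<lceil>m - K * \<sigma>\<rceil> - 1)"
  have "1 \<le> m - K * \<sigma>" using window_left sigma_ge_1 by (simp add: algebra_simps)
  then have k2: "real k2 < m - K * \<sigma>" "m - K * \<sigma> - 1 \<le> real k2"
    unfolding k2_def by linarith+
  have "k2 < q" using k2 window_right sigma_pos K_sigma_nonneg by (simp add: algebra_simps)
  have k2_window: "\<bar>real k2 - m\<bar> \<le> (K + 1) * \<sigma>"
    unfolding abs_le_iff distrib_right using k2 sigma_ge_1 K_sigma_nonneg by simp
  have "K / (2*\<sigma>) = (K/2) / \<sigma>" by simp
  also have "\<dots> \<le> (K - 1/2 - e) / \<sigma>" using e_le_tenth K_ge_2 sigma_pos by (intro divide_right_mono) auto
  also have "\<dots> = (K - 1/2) / \<sigma> - e / \<sigma>" by (simp add: diff_divide_distrib)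
  also have "\<dots> \<le> (m - real k2 - 1/2) / \<sigma>^2 - e / \<sigma>"
  proof -
    have "((K - 1/2) * \<sigma>) / \<sigma>^2 \<le> (m - real k2 - 1/2) / \<sigma>^2"
      using k2 sigma_ge_1 by (intro divide_right_mono) (auto simp: algebra_simps)
    then show ?thesis using sigma_pos by (simp add: power2_eq_square)
  qed
  also have "\<dots> \<le> ln (w (Suc k2)) - ln (w k2)"
    using log_step[of k2] k2_window sigma_pos by (simp add: algebra_simps abs_le_iff diff_divide_distrib)
  finally have "(\<Sum>k\<le>k2. w k) \<le> w k2 / (1 - exp (- (K / (2*\<sigma>))))"
    using K_ge_2 sigma_pos \<open>k2 < q\<close>
    by (intro log_concave_lower_tail[OF pos log_concave]) auto
  moreover have "(\<Sum>k\<in>{k. k \<le> q \<and> zscore k < -K}. w k) \<le> (\<Sum>k\<le>k2. w k)"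
  proof (rule sum_mono2)
    show "{k. k \<le> q \<and> zscore k < -K} \<subseteq> {..k2}"
      using k2 by (auto simp: zscore_less_iff)
  qed (use pos \<open>k2 < q\<close> in \<open>auto intro: less_imp_le\<close>)
  ultimately have "(\<Sum>k\<in>{k. k \<le> q \<and> zscore k < -K}. w k) \<le> w k2 / (1 - exp (- (K / (2*\<sigma>))))"
    by linarith
  then show ?thesis
    using pos[of k2] weight_le_amplitude[of k2] \<open>k2 < q\<close> k2_window
    by (intro tail_from_boundary[of "w k2"]) auto
qed

end

lemma integral_gauss_truncation:
  assumes "-K \<le> x" "x \<le> K" and mass: "1 - \<epsilon> < measure std_normal_distribution {-K..K}"
  shows "sqrt (2 * pi) * (measure std_normal_distribution {..x} - \<epsilon>) \<le> integral {-K..x} gauss"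
    and "integral {-K..x} gauss \<le> sqrt (2 * pi) * measure std_normal_distribution {..x}"
    and "sqrt (2 * pi) * (1 - \<epsilon>) \<le> integral {-K..K} gauss"
    and "integral {-K..K} gauss \<le> sqrt (2 * pi)"
proof -
  interpret prob_space std_normal_distribution by (rule prob_space_std_normal)
  let ?P = "measure std_normal_distribution"
  have integral_eq: "integral {-K..y} gauss = sqrt (2 * pi) * ?P {-K..y}" if "-K \<le> y" for y
    using measure_std_normal_interval[OF that] by simp
  have "?P {..x} = ?P ({..<-K} \<union> {-K..x})"
    using assms(1) by (intro arg_cong[where f = ?P]) auto
  also have "\<dots> = ?P {..<-K} + ?P {-K..x}" by (rule finite_measure_Union) auto
  finally have split_x: "?P {..x} = ?P {..<-K} + ?P {-K..x}" .
  have "?P {..<-K} + ?P {-K..K} = ?P ({..<-K} \<union> {-K..K})"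
    by (rule finite_measure_Union[symmetric]) auto
  also have "\<dots> \<le> 1" by (rule prob_le_1)
  finally have "?P {..x} - \<epsilon> \<le> ?P {-K..x}" using split_x mass by linarith
  then show "sqrt (2 * pi) * (?P {..x} - \<epsilon>) \<le> integral {-K..x} gauss"
    unfolding integral_eq[OF assms(1)] by simp
  show "integral {-K..x} gauss \<le> sqrt (2 * pi) * ?P {..x}"
    unfolding integral_eq[OF assms(1)] using split_x by simp
  show "sqrt (2 * pi) * (1 - \<epsilon>) \<le> integral {-K..K} gauss"
    unfolding integral_eq[OF order.trans[OF assms(1,2)]] using mass by simp
  show "integral {-K..K} gauss \<le> sqrt (2 * pi)"
    unfolding integral_eq[OF order.trans[OF assms(1,2)]] by (simp add: prob_le_1)
qed

context gaussian_window
begin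

definition zmass :: "real set \<Rightarrow> real" where
  "zmass A = (\<Sum>k\<in>{k. k \<le> q \<and> zscore k \<in> A}. w k) / (amplitude * \<sigma>)"

lemma zmass_nonneg: "0 \<le> zmass A"
  unfolding zmass_def using pos amplitude_pos sigma_pos
  by (intro divide_nonneg_pos sum_nonneg) (auto intro: less_imp_le)

lemma zmass_union: "A \<inter> B = {} \<Longrightarrow> zmass (A \<union> B) = zmass A + zmass B"
proof -
  assume "A \<inter> B = {}"
  then have "{k. k \<le> q \<and> zscore k \<in> A} \<inter> {k. k \<le> q \<and> zscore k \<in> B} = {}" by auto
  moreover have "{k. k \<le> q \<and> zscore k \<in> A \<union> B} = {k. k \<le> q \<and> zscore k \<in> A} \<union> {k. k \<le> q \<and> zscore k \<in> B}"
    by auto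
  ultimately show ?thesis unfolding zmass_def by (simp add: sum.union_disjoint add_divide_distrib)
qed

lemma zmass_tails: "zmass {..<-K} \<le> 6 / K" "zmass {K<..} \<le> 6 / K"
proof -
  have "0 < amplitude * \<sigma>" using amplitude_pos sigma_pos by simp
  then have "zmass {..<-K} \<le> 6 * amplitude * \<sigma> / K / (amplitude * \<sigma>)"
    "zmass {K<..} \<le> 6 * amplitude * \<sigma> / K / (amplitude * \<sigma>)"
    unfolding zmass_def using lower_tail_bound upper_tail_bound by (intro divide_right_mono; simp)+
  moreover have "6 * amplitude * \<sigma> / K / (amplitude * \<sigma>) = 6 / K" using amplitude_pos sigma_pos by simp
  ultimately show "zmass {..<-K} \<le> 6 / K" "zmass {K<..} \<le> 6 / K" by simp_all
qed

lemma cdf_ratio_eq_zmass: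
  assumes "-K \<le> x"
  shows "(\<Sum>k\<in>{k. k \<le> q \<and> zscore k \<le> x}. w k) / (\<Sum>k\<le>q. w k)
    = (zmass {..<-K} + zmass {-K..x}) / (zmass {..<-K} + zmass {-K..K} + zmass {K<..})"
proof -
  have "zmass {..x} = zmass {..<-K} + zmass {-K..x}"
    using zmass_union[of "{..<-K}" "{-K..x}"] assms by (simp add: ivl_disj_un ivl_disj_int)
  moreover have "zmass UNIV = zmass {..<-K} + zmass {-K..K} + zmass {K<..}"
  proof -
    have "{..K} \<union> {K<..} = UNIV" "{..K} \<inter> {K<..} = {}" by auto
    then have "zmass UNIV = zmass {..K} + zmass {K<..}" using zmass_union by metis
    then show ?thesis using zmass_union[of "{..<-K}" "{-K..K}"] K_ge_2 by (simp add: ivl_disj_un ivl_disj_int)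
  qed
  moreover have "(\<Sum>k\<in>{k. k \<le> q \<and> zscore k \<le> x}. w k) / (\<Sum>k\<le>q. w k) = zmass {..x} / zmass UNIV"
    using amplitude_pos sigma_pos by (simp add: zmass_def atMost_def)
  ultimately show ?thesis by simp
qed

lemma cdf_ratio_approx:
  assumes "0 < \<epsilon>" "\<epsilon> \<le> 1/10" and x: "-K \<le> x" "x \<le> K" and "6/K \<le> \<epsilon>"
    and mass: "1 - \<epsilon> < measure std_normal_distribution {-K..K}"
    and errors: "2 * (K + 2) * e * (4*K + 3) + (2*K + 3) / \<sigma> \<le> 2 * \<epsilon>"
  shows "\<bar>(\<Sum>k\<in>{k. k \<le> q \<and> zscore k \<le> x}. w k) / (\<Sum>k\<le>q. w k)
           - measure std_normal_distribution {..x}\<bar> \<le> 10 * \<epsilon>"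
  unfolding cdf_ratio_eq_zmass[OF x(1)]
proof (rule quotient_approx)
  have central: "\<bar>zmass {-K..y} - integral {-K..y} gauss\<bar> \<le> 2 * \<epsilon>" if "-K \<le> y" "y \<le> K" for y
    using central_sum_approx[OF that] errors unfolding zmass_def by simp
  have tails: "0 \<le> zmass {..<-K}" "zmass {..<-K} \<le> \<epsilon>" "0 \<le> zmass {K<..}" "zmass {K<..} \<le> \<epsilon>"
    using zmass_nonneg zmass_tails \<open>6/K \<le> \<epsilon>\<close> by (auto intro: order_trans)
  show "\<bar>zmass {..<-K} + zmass {-K..x} - integral {-K..x} gauss\<bar> \<le> 3 * \<epsilon>"
    using central[OF x] tails by linarith
  show "\<bar>zmass {..<-K} + zmass {-K..K} + zmass {K<..} - integral {-K..K} gauss\<bar> \<le> 4 * \<epsilon>"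
    using central[of K] K_ge_2 tails by linarith
qed (use assms sqrt_2pi_bounds integral_gauss_truncation[OF x mass] in
  \<open>auto intro: prob_space.prob_le_1[OF prob_space_std_normal]\<close>)

end

lemma truncation_level_exists:
  fixes x \<epsilon> :: real
  assumes "0 < \<epsilon>"
  obtains K where "2 \<le> K" "-K \<le> x" "x \<le> K" "6 / K \<le> \<epsilon>"
    "1 - \<epsilon> < measure std_normal_distribution {-K..K}"
proof -
  have large: "eventually (\<lambda>n. 2 + \<bar>x\<bar> + 6/\<epsilon> \<le> real n) sequentially"
    by (rule eventually_sequentiallyI[of "nat \<lceil>2 + \<bar>x\<bar> + 6/\<epsilon>\<rceil>"]) linarith
  have mass: "eventually (\<lambda>n. 1 - \<epsilon> < measure std_normal_distribution {- real n..real n}) sequentially"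
    using order_tendstoD(1)[OF std_normal_centered_intervals_tendsto_1] \<open>0 < \<epsilon>\<close> by simp
  obtain n where n: "2 + \<bar>x\<bar> + 6/\<epsilon> \<le> real n"
    "1 - \<epsilon> < measure std_normal_distribution {- real n..real n}"
    using eventually_happens'[OF _ eventually_conj[OF large mass]] by auto
  have "0 \<le> 6/\<epsilon>" using \<open>0 < \<epsilon>\<close> by simp
  then have "6/\<epsilon> \<le> real n" "2 \<le> real n" "- real n \<le> x" "x \<le> real n"
    using n(1) abs_ge_self[of x] abs_ge_minus_self[of x] by linarith+
  then have "6 \<le> real n * \<epsilon>" using \<open>0 < \<epsilon>\<close> by (simp add: pos_divide_le_eq)
  then have "6 / real n \<le> \<epsilon>" using \<open>2 \<le> real n\<close> by (simp add: pos_divide_le_eq mult.commute)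
  with n(2) \<open>2 \<le> real n\<close> \<open>- real n \<le> x\<close> \<open>x \<le> real n\<close> show ?thesis by (intro that) auto
qed

lemma step_error_level_exists:
  fixes K \<delta> :: real
  assumes "2 \<le> K" "0 < \<delta>"
  obtains e where "0 < e" "(K + 3) * e \<le> 1/2" "2 * (K + 2) * e * (4*K + 3) \<le> \<delta>"
proof
  define e where "e = min (1 / (2 * (K + 3))) (\<delta> / (2 * (K + 2) * (4*K + 3)))"
  show "0 < e" unfolding e_def using assms by auto
  have "(K + 3) * e \<le> (K + 3) * (1 / (2 * (K + 3)))"
    unfolding e_def using assms by (intro mult_left_mono) auto
  also have "\<dots> = 1/2" using assms by simp
  finally show "(K + 3) * e \<le> 1/2" .
  have "(2 * (K + 2) * (4*K + 3)) * e \<le> (2 * (K + 2) * (4*K + 3)) * (\<delta> / (2 * (K + 2) * (4*K + 3)))"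
    unfolding e_def using assms by (intro mult_left_mono) auto
  then show "2 * (K + 2) * e * (4*K + 3) \<le> \<delta>" using assms by (simp add: ac_simps)
qed

theorem log_concave_local_clt:
  fixes q :: "nat \<Rightarrow> nat" and w :: "nat \<Rightarrow> nat \<Rightarrow> real" and m \<sigma> :: "nat \<Rightarrow> real"
  assumes pos: "\<And>i k. k \<le> q i \<Longrightarrow> 0 < w i k"
    and log_concave: "\<And>i. log_concave_upto (q i) (w i)"
    and sigma_unbounded: "filterlim \<sigma> at_top sequentially"
    and local_estimate: "\<And>K e. 0 < K \<Longrightarrow> 0 < e \<Longrightarrow>
       eventually (\<lambda>i. gaussian_log_steps K e (q i) (w i) (m i) (\<sigma> i)) sequentially"
  shows "(\<lambda>i. (\<Sum>k\<in>{k. k \<le> q i \<and> (real k - m i) / \<sigma> i \<le> x}. w i k) / (\<Sum>k\<le>q i. w i k))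
           \<longlonglongrightarrow> cdf std_normal_distribution x"
proof (rule tendstoI)
  fix \<epsilon> :: real assume "0 < \<epsilon>"
  define \<delta> where "\<delta> = min (\<epsilon>/20) (1/10)"
  have \<delta>: "0 < \<delta>" "\<delta> \<le> 1/10" "10 * \<delta> < \<epsilon>" using \<open>0 < \<epsilon>\<close> unfolding \<delta>_def by auto
  obtain K where K: "2 \<le> K" "-K \<le> x" "x \<le> K" "6 / K \<le> \<delta>"
    "1 - \<delta> < measure std_normal_distribution {-K..K}"
    using truncation_level_exists[OF \<open>0 < \<delta>\<close>] by blast
  obtain e where "0 < e" and e_small: "(K + 3) * e \<le> 1/2" and e_error: "2 * (K + 2) * e * (4*K + 3) \<le> \<delta>"
    using step_error_level_exists[OF K(1) \<delta>(1)] by blast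
  have "eventually (\<lambda>i. max 1 (max K ((2*K + 3) / \<delta>)) \<le> \<sigma> i) sequentially"
    using sigma_unbounded unfolding filterlim_at_top by blast
  moreover have "0 < K + 2" using K by simp
  note local_estimate[OF this \<open>0 < e\<close>]
  ultimately show "eventually (\<lambda>i. dist ((\<Sum>k\<in>{k. k \<le> q i \<and> (real k - m i) / \<sigma> i \<le> x}. w i k) / (\<Sum>k\<le>q i. w i k))
           (cdf std_normal_distribution x) < \<epsilon>) sequentially"
  proof eventually_elim
    case (elim i)
    have sigma: "1 \<le> \<sigma> i" "K \<le> \<sigma> i" "(2*K + 3) / \<delta> \<le> \<sigma> i" using elim(1) by auto
    interpret gaussian_window "q i" "w i" "m i" "\<sigma> i" K e
      by unfold_locales (use pos log_concave sigma elim(2) K \<open>0 < e\<close> e_small in auto)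
    have "(2*K + 3) / \<sigma> i \<le> \<delta>" using sigma(3) \<delta>(1) sigma_pos by (simp add: pos_divide_le_eq mult.commute)
    then have "\<bar>(\<Sum>k\<in>{k. k \<le> q i \<and> zscore k \<le> x}. w i k) / (\<Sum>k\<le>q i. w i k)
        - measure std_normal_distribution {..x}\<bar> \<le> 10 * \<delta>"
      using e_error \<delta> K by (intro cdf_ratio_approx) auto
    then show ?case using \<delta> by (simp add: dist_real_def zscore_def cdf_def)
  qed
qed

section \<open>The weights of \<open>B\<^sub>p\<^sub>,\<^sub>q\<close>\<close>

lemma B_weight_pos: "k \<le> q \<Longrightarrow> 0 < B_weight p q k"
  unfolding B_weight_def by simp

definition B_ratio :: "nat \<Rightarrow> nat \<Rightarrow> nat \<Rightarrow> real" where
  "B_ratio p q j = (real q - real j) * (real p + real j + 1) / (real j + 1)^2"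

lemma B_weight_Suc:
  assumes "j < q"
  shows "B_weight p q (Suc j) = B_weight p q j * B_ratio p q j"
proof -
  have choose_q: "real (q choose Suc j) * (real j + 1) = real (q choose j) * (real q - real j)"
  proof -
    have "Suc j * (q choose Suc j) = (q - j) * (q choose j)"
      using binomial_absorption[of j q] binomial_absorb_comp[of q j] by simp
    then have "real (Suc j * (q choose Suc j)) = real ((q - j) * (q choose j))" by simp
    then show ?thesis using assms by (simp add: of_nat_diff algebra_simps)
  qed
  have choose_p: "real ((p + Suc j) choose Suc j) * (real j + 1) = real ((p + j) choose j) * (real p + real j + 1)"
  proof -
    have "Suc (p + j) * ((p + j) choose j) = ((p + Suc j) choose Suc j) * Suc j"
      using Suc_times_binomial_eq[of "p + j" j] by simp
    then have "real (Suc (p + j) * ((p + j) choose j)) = real (((p + Suc j) choose Suc j) * Suc j)" by simp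
    then show ?thesis by (simp add: algebra_simps)
  qed
  have "B_weight p q (Suc j) * (real j + 1)^2
      = (real (q choose Suc j) * (real j + 1)) * (real ((p + Suc j) choose Suc j) * (real j + 1))"
    unfolding B_weight_def by (simp add: power2_eq_square algebra_simps)
  also have "\<dots> = B_weight p q j * ((real q - real j) * (real p + real j + 1))"
    unfolding choose_q choose_p B_weight_def by (simp add: algebra_simps)
  finally have "B_weight p q (Suc j) * (real j + 1)^2 = B_weight p q j * ((real q - real j) * (real p + real j + 1))" .
  then show ?thesis unfolding B_ratio_def by (simp add: field_simps)
qed

lemma B_ratio_pos: "j < q \<Longrightarrow> 0 < B_ratio p q j"
  unfolding B_ratio_def by (intro divide_pos_pos mult_pos_pos) auto

lemma ln_B_weight_Suc:
  assumes "j < q"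
  shows "ln (B_weight p q (Suc j)) - ln (B_weight p q j) = ln (B_ratio p q j)"
  using B_ratio_pos[OF assms, of p] B_weight_Suc[OF assms, of p] B_weight_pos[of j q p] assms by (simp add: ln_mult)

lemma B_ratio_antimono:
  assumes "a \<le> b" "b < q"
  shows "B_ratio p q b \<le> B_ratio p q a"
proof -
  have split: "B_ratio p q j = ((real q - real j) / (real j + 1)) * ((real p + real j + 1) / (real j + 1))" for j
    unfolding B_ratio_def by (simp add: power2_eq_square)
  have "(real q - real b) * (real a + 1) \<le> (real q - real a) * (real b + 1)"
    using assms mult_right_mono[of "real a" "real b" "real q + 1"] by (simp add: algebra_simps)
  then have "(real q - real b) / (real b + 1) \<le> (real q - real a) / (real a + 1)"
    by (simp add: divide_simps)
  moreover have "(real p + real b + 1) * (real a + 1) \<le> (real p + real a + 1) * (real b + 1)"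
    using assms mult_left_mono[of "real a" "real b" "real p"] by (simp add: algebra_simps)
  then have "(real p + real b + 1) / (real b + 1) \<le> (real p + real a + 1) / (real a + 1)"
    by (simp add: divide_simps)
  ultimately show ?thesis unfolding split using assms by (intro mult_mono) auto
qed

lemma log_concave_B_weight: "log_concave_upto q (B_weight p q)"
  unfolding log_concave_upto_def
  using B_ratio_pos B_ratio_antimono by (simp add: ln_B_weight_Suc)

lemma cdf_normalized_B:
  fixes c :: real and n :: nat
  defines "q \<equiv> nat \<lfloor>c * real n\<rfloor>"
  defines "m \<equiv> m_pq (real n) (real q)" and "s \<equiv> sqrt (s2_pq (real n) (real q))"
  shows "cdf (normalized_B c n) x =
     (\<Sum>k\<in>{k. k \<le> q \<and> (real k - m) / s \<le> x}. B_weight n q k) / (\<Sum>k\<le>q. B_weight n q k)"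
proof -
  define Z where "Z = (\<Sum>j\<le>q. B_weight n q j)"
  have "0 < Z" unfolding Z_def by (intro sum_pos) (auto simp: B_weight_pos)
  define f where "f k = (if k \<le> q then B_weight n q k / Z else 0)" for k
  have f_nonneg: "0 \<le> f k" for k unfolding f_def using \<open>0 < Z\<close> B_weight_pos by (auto intro: less_imp_le)
  have "(\<integral>\<^sup>+k. ennreal (f k) \<partial>count_space UNIV) = (\<Sum>k\<le>q. ennreal (f k))"
    by (rule nn_integral_count_space') (auto simp: f_def)
  also have "\<dots> = ennreal (\<Sum>k\<le>q. f k)" using f_nonneg by (simp add: sum_ennreal)
  also have "(\<Sum>k\<le>q. f k) = 1"
    unfolding f_def Z_def using \<open>0 < Z\<close>[unfolded Z_def] by (simp add: sum_divide_distrib[symmetric])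
  finally have "pmf (embed_pmf f) k = f k" for k by (simp add: pmf_embed_pmf[OF f_nonneg])
  moreover have "B_pmf n q = embed_pmf f" unfolding B_pmf_def f_def Z_def by simp
  ultimately have pmf_B: "pmf (B_pmf n q) k = f k" for k by simp
  then have "set_pmf (B_pmf n q) \<subseteq> {..q}" by (auto simp: set_pmf_iff f_def split: if_splits)
  define A where "A = {k. (real k - m) / s \<le> x}"
  have "cdf (normalized_B c n) x = measure (measure_pmf (B_pmf n q)) A"
    unfolding cdf_def normalized_B_def Let_def q_def[symmetric] m_def[symmetric] s_def[symmetric] A_def
    by (subst measure_distr) (auto simp: vimage_def)
  also have "\<dots> = measure (measure_pmf (B_pmf n q)) (A \<inter> {..q})"
    using \<open>set_pmf (B_pmf n q) \<subseteq> {..q}\<close> by (metis inf.absorb_iff2 inf_assoc measure_Int_set_pmf)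
  also have "\<dots> = (\<Sum>k\<in>A \<inter> {..q}. B_weight n q k) / Z"
    by (subst measure_measure_pmf_finite) (auto simp: pmf_B f_def sum_divide_distrib intro!: sum.cong)
  also have "A \<inter> {..q} = {k. k \<le> q \<and> (real k - m) / s \<le> x}" unfolding A_def by auto
  finally show ?thesis unfolding Z_def .
qed

section \<open>Asymptotics of the weight ratios\<close>

definition disc_root :: "real \<Rightarrow> real" where
  "disc_root c = sqrt (1 + 6*c + c^2)"

definition mean_rate :: "real \<Rightarrow> real" where
  "mean_rate c = (c - 1 + disc_root c) / 4"

definition var_rate :: "real \<Rightarrow> real" where
  "var_rate c = (c - 1) / 8 + (1 + c)^2 / (8 * disc_root c)"

context
  fixes c :: real
  assumes c_pos: "0 < c"
begin

lemma disc_root_sq: "(disc_root c)^2 = 1 + 6*c + c^2"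
  unfolding disc_root_def using c_pos by simp

lemma disc_root_pos: "0 < disc_root c"
  unfolding disc_root_def using c_pos by (simp add: add_pos_nonneg)

lemma disc_root_gt: "c + 1 < disc_root c"
proof -
  have "(c + 1)^2 < (disc_root c)^2" unfolding disc_root_sq using c_pos by (simp add: power2_eq_square algebra_simps)
  then show ?thesis using disc_root_pos by (simp add: power_less_imp_less_base)
qed

lemma disc_root_less: "disc_root c < 3*c + 1"
proof -
  have "(disc_root c)^2 < (3*c + 1)^2" unfolding disc_root_sq using c_pos by (simp add: power2_eq_square algebra_simps)
  then show ?thesis using c_pos by (smt (verit) power_mono)
qed

lemma mean_rate_pos: "0 < mean_rate c"
  unfolding mean_rate_def using disc_root_gt c_pos by simp

lemma mean_rate_less: "mean_rate c < c"
  unfolding mean_rate_def using disc_root_less by simp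

lemma mean_rate_sq: "(mean_rate c)^2 = ((c + 1)^2 + (c - 1) * disc_root c) / 8"
proof -
  have "(mean_rate c)^2 = ((c - 1)^2 + 2*(c - 1)*disc_root c + (disc_root c)^2) / 16"
    unfolding mean_rate_def by (simp add: power2_eq_square algebra_simps)
  then show ?thesis unfolding disc_root_sq by (simp add: power2_eq_square algebra_simps)
qed

lemma mean_rate_product: "(c - mean_rate c) * (1 + mean_rate c) = (mean_rate c)^2"
proof -
  have "16 * ((c - mean_rate c) * (1 + mean_rate c)) = (3*c + 1 - disc_root c) * (c + 3 + disc_root c)"
    unfolding mean_rate_def by (simp add: field_simps)
  also have "\<dots> = 2 * ((c + 1)^2 + (c - 1) * disc_root c)"
    using disc_root_sq by (simp add: power2_eq_square algebra_simps)
  finally show ?thesis unfolding mean_rate_sq by simp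
qed

lemma var_rate_eq: "var_rate c * disc_root c = (mean_rate c)^2"
  unfolding mean_rate_sq var_rate_def using disc_root_pos by (simp add: field_simps)

lemma var_rate_pos: "0 < var_rate c"
  using var_rate_eq mean_rate_pos disc_root_pos by (metis zero_less_power zero_less_mult_pos2)

lemma var_rate_identity:
  "1 / (c - mean_rate c) - 1 / (1 + mean_rate c) + 2 / mean_rate c = 1 / var_rate c"
proof -
  let ?\<mu> = "mean_rate c"
  have "1 / (c - ?\<mu>) - 1 / (1 + ?\<mu>) + 2 / ?\<mu> = ((1 + ?\<mu>) - (c - ?\<mu>) + 2 * ?\<mu>) / ?\<mu>^2"
    using mean_rate_product mean_rate_pos mean_rate_less
    by (simp add: field_simps power2_eq_square)
  also have "(1 + ?\<mu>) - (c - ?\<mu>) + 2 * ?\<mu> = disc_root c" unfolding mean_rate_def by (simp add: field_simps)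
  also have "disc_root c / ?\<mu>^2 = 1 / var_rate c"
    using var_rate_eq disc_root_pos var_rate_pos mean_rate_pos by (simp add: field_simps)
  finally show ?thesis .
qed

lemma m_pq_scale: "0 < p \<Longrightarrow> m_pq p (c * p) = mean_rate c * p"
  and s2_pq_scale: "0 < p \<Longrightarrow> s2_pq p (c * p) = var_rate c * p"
proof -
  assume p: "0 < p"
  have "p^2 + 6*p*(c*p) + (c*p)^2 = p^2 * (1 + 6*c + c^2)" by (simp add: power2_eq_square algebra_simps)
  then have root: "sqrt (p^2 + 6*p*(c*p) + (c*p)^2) = p * disc_root c"
    unfolding disc_root_def using p by (simp add: real_sqrt_mult)
  show "m_pq p (c * p) = mean_rate c * p" unfolding m_pq_def root mean_rate_def by (simp add: algebra_simps)
  have "(p + c*p)^2 / (8 * (p * disc_root c)) = p * ((1 + c)^2 / (8 * disc_root c))"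
    using p disc_root_pos by (simp add: power2_eq_square field_simps)
  then show "s2_pq p (c * p) = var_rate c * p" unfolding s2_pq_def root var_rate_def
    by (simp add: algebra_simps diff_divide_distrib)
qed

end

lemma abs_ln_one_plus_minus_le:
  fixes x b :: real
  assumes "\<bar>x\<bar> \<le> b" "b \<le> 1/2"
  shows "\<bar>ln (1 + x) - x\<bar> \<le> 2 * b^2"
proof -
  have "\<bar>ln (1 + x) - x\<bar> \<le> 2 * x^2" using abs_ln_one_plus_x_minus_x_bound[of x] assms by simp
  also have "x^2 \<le> b^2" using power_mono[of "\<bar>x\<bar>" b 2] assms by simp
  finally show ?thesis by simp
qed

lemma abs_divide_square_le:
  fixes v a y B :: real
  assumes "0 < a" "1 \<le> y" "\<bar>v\<bar> \<le> B * y"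
  shows "\<bar>v / (a * y^2)\<bar> \<le> (B / a) / y"
proof -
  have "\<bar>v / (a * y^2)\<bar> = \<bar>v\<bar> / (a * y^2)" using assms by (simp add: abs_divide)
  also have "\<dots> \<le> (B * y) / (a * y^2)" using assms by (intro divide_right_mono) auto
  also have "\<dots> = (B / a) / y" using assms by (simp add: power2_eq_square field_simps)
  finally show ?thesis .
qed

lemma first_order_cancellation:
  fixes \<alpha> \<beta> \<mu> \<sigma> y u :: real
  assumes "\<alpha> \<noteq> 0" "\<beta> \<noteq> 0" "\<mu> \<noteq> 0" "\<sigma> \<noteq> 0" "y \<noteq> 0"
    and identity: "1/\<alpha> - 1/\<beta> + 2/\<mu> = 1/\<sigma>^2"
  shows "(- u) / (\<alpha> * y^2) + (u + 1) / (\<beta> * y^2) - 2 * ((u + 1) / (\<mu> * y^2)) + (u + 1/2) / (\<sigma> * y)^2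
    = (1/\<beta> - 2/\<mu> + 1 / (2 * \<sigma>^2)) / y^2"
proof -
  have sigma_terms: "(u + 1/2) / (\<sigma> * y)^2 = (u + 1/2) * (1/\<alpha> - 1/\<beta> + 2/\<mu>) / y^2"
    "1 / (2 * \<sigma>^2) = (1/\<alpha> - 1/\<beta> + 2/\<mu>) / 2"
    unfolding identity by (simp_all add: power_mult_distrib)
  show ?thesis unfolding sigma_terms using assms(1-3,5) by (simp add: field_simps)
qed

lemma ln_ratio_second_order:
  fixes x1 x2 x3 b1 b2 b3 :: real
  assumes "\<bar>x1\<bar> \<le> b1" "\<bar>x2\<bar> \<le> b2" "\<bar>x3\<bar> \<le> b3" "b1 \<le> 1/2" "b2 \<le> 1/2" "b3 \<le> 1/2"
  shows "\<bar>ln ((1 + x1) * (1 + x2) / (1 + x3)^2) - (x1 + x2 - 2 * x3)\<bar> \<le> 2 * b1^2 + 2 * b2^2 + 4 * b3^2"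
proof -
  have "0 < 1 + x1" "0 < 1 + x2" "0 < 1 + x3" using assms unfolding abs_le_iff by linarith+
  then have "ln ((1 + x1) * (1 + x2) / (1 + x3)^2) - (x1 + x2 - 2 * x3)
      = (ln (1 + x1) - x1) + (ln (1 + x2) - x2) - 2 * (ln (1 + x3) - x3)"
    by (simp add: ln_mult ln_div ln_realpow)
  then show ?thesis
    using abs_ln_one_plus_minus_le[OF assms(1,4)] abs_ln_one_plus_minus_le[OF assms(2,5)]
      abs_ln_one_plus_minus_le[OF assms(3,6)]
    by (smt (verit))
qed

lemma ln_quadratic_ratio_approx:
  fixes \<alpha> \<beta> \<mu> \<sigma> y K e u :: real
  assumes pos: "0 < \<alpha>" "0 < \<beta>" "0 < \<mu>" "0 < \<sigma>" "0 < e" "1 \<le> y"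
    and product: "\<alpha> * \<beta> = \<mu>^2" and identity: "1/\<alpha> - 1/\<beta> + 2/\<mu> = 1/\<sigma>^2"
    and u: "\<bar>u\<bar> \<le> K * \<sigma> * y"
    and large: "2 * (K * \<sigma> / \<alpha>) \<le> y" "2 * ((K * \<sigma> + 1) / \<beta>) \<le> y" "2 * ((K * \<sigma> + 1) / \<mu>) \<le> y"
      "(\<bar>1/\<beta> - 2/\<mu> + 1 / (2 * \<sigma>^2)\<bar> + 2 * (K * \<sigma> / \<alpha>)^2 + 2 * ((K * \<sigma> + 1) / \<beta>)^2
         + 4 * ((K * \<sigma> + 1) / \<mu>)^2) * \<sigma> / e \<le> y"
  shows "\<bar>ln ((\<alpha> * y^2 - u) * (\<beta> * y^2 + u + 1) / (\<mu> * y^2 + u + 1)^2) + (u + 1/2) / (\<sigma> * y)^2\<bar>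
    \<le> e / (\<sigma> * y)"
proof -
  define x1 x2 x3 where "x1 = (- u) / (\<alpha> * y^2)" and "x2 = (u + 1) / (\<beta> * y^2)"
    and "x3 = (u + 1) / (\<mu> * y^2)"
  define b1 b2 b3 where "b1 = K * \<sigma> / \<alpha>" and "b2 = (K * \<sigma> + 1) / \<beta>" and "b3 = (K * \<sigma> + 1) / \<mu>"
  define C where "C = 1/\<beta> - 2/\<mu> + 1 / (2 * \<sigma>^2)"
  have "0 < y" using pos by simp
  have "\<bar>u + 1\<bar> \<le> (K * \<sigma> + 1) * y" using u pos by (simp add: algebra_simps)
  then have x_le: "\<bar>x1\<bar> \<le> b1 / y" "\<bar>x2\<bar> \<le> b2 / y" "\<bar>x3\<bar> \<le> b3 / y"
    unfolding x1_def x2_def x3_def b1_def b2_def b3_def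
    using abs_divide_square_le[of _ y] u pos by auto
  have "b / y \<le> 1/2" if "2 * b \<le> y" for b
    using that \<open>0 < y\<close> by (simp add: pos_divide_le_eq)
  then have b_le: "b1 / y \<le> 1/2" "b2 / y \<le> 1/2" "b3 / y \<le> 1/2"
    using large unfolding b1_def b2_def b3_def by blast+
  have "(\<alpha> * y^2 - u) * (\<beta> * y^2 + u + 1) = (\<alpha> * \<beta>) * (y^2)^2 * ((1 + x1) * (1 + x2))"
    "(\<mu> * y^2 + u + 1)^2 = \<mu>^2 * (y^2)^2 * (1 + x3)^2"
    unfolding x1_def x2_def x3_def using pos by (simp_all add: field_simps power2_eq_square)
  then have "(\<alpha> * y^2 - u) * (\<beta> * y^2 + u + 1) / (\<mu> * y^2 + u + 1)^2 = (1 + x1) * (1 + x2) / (1 + x3)^2"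
    unfolding product using pos by simp
  moreover have "x1 + x2 - 2 * x3 = C / y^2 - (u + 1/2) / (\<sigma> * y)^2"
    using first_order_cancellation[OF _ _ _ _ _ identity, of y u] pos
    unfolding x1_def x2_def x3_def C_def by simp
  ultimately have "\<bar>ln ((\<alpha> * y^2 - u) * (\<beta> * y^2 + u + 1) / (\<mu> * y^2 + u + 1)^2) + (u + 1/2) / (\<sigma> * y)^2
      - C / y^2\<bar> \<le> 2 * (b1 / y)^2 + 2 * (b2 / y)^2 + 4 * (b3 / y)^2"
    using ln_ratio_second_order[OF x_le b_le] by simp
  moreover have "\<bar>C / y^2\<bar> = \<bar>C\<bar> / y^2" by (simp add: abs_divide)
  ultimately have "\<bar>ln ((\<alpha> * y^2 - u) * (\<beta> * y^2 + u + 1) / (\<mu> * y^2 + u + 1)^2) + (u + 1/2) / (\<sigma> * y)^2\<bar>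
      \<le> \<bar>C\<bar> / y^2 + 2 * (b1 / y)^2 + 2 * (b2 / y)^2 + 4 * (b3 / y)^2"
    by linarith
  also have "\<dots> = ((\<bar>C\<bar> + 2 * b1^2 + 2 * b2^2 + 4 * b3^2) * \<sigma> / e) * (e / (\<sigma> * y)) / y"
    using pos by (simp add: power_divide field_simps power2_eq_square)
  also have "\<dots> \<le> y * (e / (\<sigma> * y)) / y"
    using large(4) pos unfolding C_def b1_def b2_def b3_def
    by (intro divide_right_mono mult_right_mono) auto
  also have "\<dots> = e / (\<sigma> * y)" using pos by simp
  finally show ?thesis .
qed

lemma gaussian_log_steps_quadratic_ratio:
  fixes w :: "nat \<Rightarrow> real" and \<alpha> \<beta> \<mu> \<sigma> y K e :: real
  assumes pos: "0 < \<alpha>" "0 < \<beta>" "0 < \<mu>" "0 < \<sigma>" "0 < K" "0 < e" "1 \<le> y"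
    and product: "\<alpha> * \<beta> = \<mu>^2" and identity: "1/\<alpha> - 1/\<beta> + 2/\<mu> = 1/\<sigma>^2"
    and large: "2 * (K * \<sigma> / \<alpha>) \<le> y" "2 * ((K * \<sigma> + 1) / \<beta>) \<le> y" "2 * ((K * \<sigma> + 1) / \<mu>) \<le> y"
      "(\<bar>1/\<beta> - 2/\<mu> + 1 / (2 * \<sigma>^2)\<bar> + 2 * (K * \<sigma> / \<alpha>)^2 + 2 * ((K * \<sigma> + 1) / \<beta>)^2
         + 4 * ((K * \<sigma> + 1) / \<mu>)^2) * \<sigma> / e \<le> y"
      "(K * \<sigma> + 1) / \<mu> \<le> y" "(K * \<sigma> + 1) / \<alpha> \<le> y"
    and q: "real q = (\<mu> + \<alpha>) * y^2"
    and ratio: "\<And>j. j < q \<Longrightarrow> ln (w (Suc j)) - ln (w j)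
      = ln ((\<alpha> * y^2 - (real j - \<mu> * y^2)) * (\<beta> * y^2 + (real j - \<mu> * y^2) + 1)
            / (\<mu> * y^2 + (real j - \<mu> * y^2) + 1)^2)"
  shows "gaussian_log_steps K e q w (\<mu> * y^2) (\<sigma> * y)"
  unfolding gaussian_log_steps_def
proof (intro conjI allI impI)
  have window: "K * \<sigma> * y + 1 \<le> a * y^2" if "0 < a" "(K * \<sigma> + 1) / a \<le> y" for a
  proof -
    have "(K * \<sigma> + 1) * y \<le> (a * y) * y"
      using that pos by (intro mult_right_mono) (auto simp: pos_divide_le_eq mult.commute)
    then show ?thesis using pos by (simp add: power2_eq_square algebra_simps)
  qed
  show "1 \<le> \<mu> * y^2 - K * (\<sigma> * y)" using window[OF pos(3) large(5)] by (simp add: algebra_simps)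
  show "\<mu> * y^2 + K * (\<sigma> * y) + 1 \<le> real q" using window[OF pos(1) large(6)] q by (simp add: algebra_simps)
  fix j :: nat assume j: "\<bar>real j - \<mu> * y^2\<bar> \<le> K * (\<sigma> * y)"
  then have "j < q" using window[OF pos(1) large(6)] q by (simp add: abs_le_iff algebra_simps)
  have "\<bar>real j - \<mu> * y^2\<bar> \<le> K * \<sigma> * y" using j by (simp add: mult.assoc)
  from ln_quadratic_ratio_approx[OF pos(1-4,6,7) product identity this large(1-4)]
  show "\<bar>ln (w (Suc j)) - ln (w j) + (real j + 1/2 - \<mu> * y^2) / (\<sigma> * y)^2\<bar> \<le> e / (\<sigma> * y)"
    unfolding ratio[OF \<open>j < q\<close>] by (simp add: algebra_simps)
qed

lemma B_weight_gaussian_log_steps: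
  fixes c K e :: real
  assumes "0 < c" "0 < K" "0 < e"
  shows "eventually (\<lambda>n. \<forall>q. real q = c * real n \<longrightarrow>
    gaussian_log_steps K e q (B_weight n q) (m_pq (real n) (real q)) (sqrt (s2_pq (real n) (real q)))) sequentially"
proof -
  define \<mu> \<alpha> \<beta> where "\<mu> = mean_rate c" and "\<alpha> = c - mean_rate c" and "\<beta> = 1 + mean_rate c"
  define \<sigma> where "\<sigma> = sqrt (var_rate c)"
  have pos: "0 < \<alpha>" "0 < \<beta>" "0 < \<mu>" "0 < \<sigma>"
    unfolding \<alpha>_def \<beta>_def \<mu>_def \<sigma>_def
    using mean_rate_pos mean_rate_less var_rate_pos assms(1) by (auto simp: add_pos_pos)
  have "\<sigma>^2 = var_rate c" unfolding \<sigma>_def using var_rate_pos[OF assms(1)] by simp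
  then have identity: "1/\<alpha> - 1/\<beta> + 2/\<mu> = 1/\<sigma>^2" and product: "\<alpha> * \<beta> = \<mu>^2"
    unfolding \<alpha>_def \<beta>_def \<mu>_def using var_rate_identity mean_rate_product assms(1) by simp_all
  define T where "T = {1, 2 * (K * \<sigma> / \<alpha>), 2 * ((K * \<sigma> + 1) / \<beta>), 2 * ((K * \<sigma> + 1) / \<mu>),
    (\<bar>1/\<beta> - 2/\<mu> + 1 / (2 * \<sigma>^2)\<bar> + 2 * (K * \<sigma> / \<alpha>)^2 + 2 * ((K * \<sigma> + 1) / \<beta>)^2
      + 4 * ((K * \<sigma> + 1) / \<mu>)^2) * \<sigma> / e, (K * \<sigma> + 1) / \<mu>, (K * \<sigma> + 1) / \<alpha>}"
  define Y where "Y = Max T"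
  have "finite T" "1 \<in> T" unfolding T_def by simp_all
  show ?thesis
  proof (rule eventually_sequentiallyI[of "nat \<lceil>Y^2\<rceil>"], intro allI impI)
    fix n q assume "nat \<lceil>Y^2\<rceil> \<le> n" and q: "real q = c * real n"
    define y where "y = sqrt (real n)"
    have "1 \<le> Y" unfolding Y_def using \<open>finite T\<close> \<open>1 \<in> T\<close> by (rule Max_ge)
    moreover have "Y \<le> y" unfolding y_def using \<open>nat \<lceil>Y^2\<rceil> \<le> n\<close> \<open>1 \<le> Y\<close> by (simp add: real_le_rsqrt)
    ultimately have "1 \<le> y" by simp
    have above_T: "t \<le> y" if "t \<in> T" for t
      using Max_ge[OF \<open>finite T\<close> that] \<open>Y \<le> y\<close> unfolding Y_def by simp
    have n: "real n = y^2" "0 < real n" unfolding y_def using \<open>1 \<le> y\<close> y_def by auto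
    have "m_pq (real n) (real q) = \<mu> * y^2" "sqrt (s2_pq (real n) (real q)) = \<sigma> * y"
      unfolding q using m_pq_scale[OF assms(1) n(2)] s2_pq_scale[OF assms(1) n(2)] var_rate_pos[OF assms(1)]
        \<open>1 \<le> y\<close> by (simp_all add: \<mu>_def \<sigma>_def n(1) real_sqrt_mult)
    moreover have "gaussian_log_steps K e q (B_weight n q) (\<mu> * y^2) (\<sigma> * y)"
    proof (rule gaussian_log_steps_quadratic_ratio[OF pos assms(2,3) \<open>1 \<le> y\<close> product identity])
      show "real q = (\<mu> + \<alpha>) * y^2" unfolding q n(1) \<alpha>_def \<mu>_def by simp
      show "ln (B_weight n q (Suc j)) - ln (B_weight n q j)
          = ln ((\<alpha> * y^2 - (real j - \<mu> * y^2)) * (\<beta> * y^2 + (real j - \<mu> * y^2) + 1)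
            / (\<mu> * y^2 + (real j - \<mu> * y^2) + 1)^2)" if "j < q" for j
        unfolding ln_B_weight_Suc[OF that] B_ratio_def q n(1) \<alpha>_def \<beta>_def \<mu>_def by (simp add: algebra_simps)
    qed (rule above_T, simp add: T_def)+
    ultimately show "gaussian_log_steps K e q (B_weight n q) (m_pq (real n) (real q)) (sqrt (s2_pq (real n) (real q)))"
      by simp
  qed
qed

theorem mainTheorem11:
  fixes c :: real and r :: "nat \<Rightarrow> nat"
  assumes "c \<ge> 1"
    and "\<And>k. r k > 0 \<and> c * real (r k) \<in> \<int>"
    and "filterlim r at_top sequentially"
  shows "weak_conv_m (\<lambda>k. normalized_B c (r k)) std_normal_distribution"
proof -
  define q where "q k = nat \<lfloor>c * real (r k)\<rfloor>" for k
  have q: "real (q k) = c * real (r k)" for k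
    using assms(1) assms(2)[of k] unfolding q_def by (auto elim!: Ints_cases)
  let ?m = "\<lambda>k. m_pq (real (r k)) (real (q k))" and ?s = "\<lambda>k. sqrt (s2_pq (real (r k)) (real (q k)))"
  have "?s k = sqrt (var_rate c) * sqrt (real (r k))" for k
    using s2_pq_scale[of c "real (r k)"] assms(1,2) var_rate_pos[of c] by (simp add: q real_sqrt_mult)
  moreover have "filterlim (\<lambda>k. sqrt (var_rate c) * sqrt (real (r k))) at_top sequentially"
    using assms(1) var_rate_pos[of c]
    by (intro filterlim_tendsto_pos_mult_at_top[OF tendsto_const] filterlim_compose[OF sqrt_at_top]
        filterlim_compose[OF filterlim_real_sequentially assms(3)]) auto
  ultimately have "filterlim ?s at_top sequentially" by simp
  moreover have "eventually (\<lambda>k. gaussian_log_steps K e (q k) (B_weight (r k) (q k)) (?m k) (?s k)) sequentially"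
    if "0 < K" "0 < e" for K e
    using eventually_compose_filterlim[OF B_weight_gaussian_log_steps[of c K e] assms(3)] that assms(1) q
    by (auto elim!: eventually_mono)
  ultimately have "(\<lambda>k. cdf (normalized_B c (r k)) x) \<longlonglongrightarrow> cdf std_normal_distribution x" for x
    unfolding cdf_normalized_B q_def[symmetric]
    by (intro log_concave_local_clt B_weight_pos log_concave_B_weight)
  then show ?thesis unfolding weak_conv_m_def weak_conv_def by blast
qed

end
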